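(* Let $(X,\nu,\eta)$ be a solution of the fluid equations with some arrival rate $\lambda\ge0$ and initial condition in $\bar{\mathcal S}_0$, and let $Q$ be its queue process. Then $\limsup_{t\to\infty}\int_0^tQ(s)g^s(t-s)\,ds\le\limsup_{t\to\infty}Q(t)$.
   Context: Standing assumption (A1): $G^s,G^r$ are cumulative distribution functions on $[0,\infty)$ with $G^s(0+)=G^r(0+)=0$, absolutely continuous with densities $g^s,g^r$. Write $\bar G^s=1-G^s$, $\bar G^r=1-G^r$, $H^s=\sup\{x\ge0:G^s(x)<1\}$, $H^r=\sup\{x\ge0:G^r(x)<1\}$, and hazard rates $h^s=g^s/\bar G^s$ on $[0,H^s)$, $h^r=g^r/\bar G^r$ on $[0,H^r)$. It is assumed that $\int_0^\infty\bar G^r(x)\,dx<\infty$, $\int_0^\infty\bar G^s(x)\,dx=\int_0^\infty xg^s(x)\,dx=1$, and that there exist $\bar H^s<H^s$ and $\bar H^r<H^r$ such that $h^s$ (resp. $h^r$) is a.e. equal to a function that is bounded or lower semicontinuous on $(\bar H^s,H^s)$ (resp. $(\bar H^r,H^r)$). Notation: $\mathcal M_F[0,H)$ is the set of finite nonnegative Borel measures on $[0,H)$; $\langle\psi,\mu\rangle=\int\psi\,d\mu$; $\mathbf 1$ is the constant function $1$; for $\mu\in\mathcal M_F[0,H)$, $F^\mu(x)=\mu[0,x]$ and $(F^\mu)^{-1}(y)=\inf\{x>0:F^\mu(x)\ge y\}$. State space: $\bar{\mathcal S}_0=\{(x,\nu,\eta)\in\mathbb R_+\times\mathcal M_F[0,H^s)\times\mathcal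 M_F[0,H^r):1-\langle\mathbf 1,\nu\rangle=[1-x]^+\}$. Fluid equations: Given $\lambda\ge0$ and $(X(0),\nu_0,\eta_0)\in\bar{\mathcal S}_0$, a càdlàg function $t\mapsto(X(t),\nu_t,\eta_t)$ is a solution of the fluid equations with arrival rate $\lambda$ and this initial condition if for all $t\ge0$: $S(t):=\int_0^t\langle h^r,\eta_s\rangle ds<\infty$ and $D(t):=\int_0^t\langle h^s,\nu_s\rangle ds<\infty$; for every $\varphi\in C^1_c([0,H^s)\times\mathbb R_+)$, $\langle\varphi(\cdot,t),\nu_t\rangle=\langle\varphi(\cdot,0),\nu_0\rangle+\int_0^t\langle\varphi_s(\cdot,s)+\varphi_x(\cdot,s),\nu_s\rangle ds-\int_0^t\langle h^s\varphi(\cdot,s),\nu_s\rangle ds+\int_0^t\varphi(0,s)\,dK(s)$, where $K(t)=\langle\mathbf 1,\nu_t\rangle-\langle\mathbf 1,\nu_0\rangle+D(t)$; for every $\varphi\in C^1_c([0,H^r)\times\mathbb R_+)$, $\langle\varphi(\cdot,t),\eta_t\rangle=\langle\varphi(\cdot,0),\eta_0\rangle+\int_0^t\langle\varphi_s(\cdot,s)+\varphi_x(\cdot,s),\eta_s\rangle ds-\int_0^t\langle h^r\varphi(\cdot,s),\eta_s\rangle ds+\lambda\int_0^t\varphi(0,s)\,ds$; $1-\langle\mathbf 1,\nu_t\rangle=[1-X(t)]^+$; $X(t)=X(0)+\lambda t-D(t)-R(t)$ with $R(t)=\int_0^t\int_0^{Q(s)}h^r((F^{\eta_s})^{-1}(y))\,dy\,ds$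 and $Q(t)=X(t)-\langle\mathbf 1,\nu_t\rangle$; and $Q(t)\le\langle\mathbf 1,\eta_t\rangle$. *)

theory Defs
  imports "HOL-Analysis.Analysis"
begin

definition supp_end :: "(real \<Rightarrow> real) \<Rightarrow> ereal" where
  "supp_end G = Sup (ereal ` {x. 0 \<le> x \<and> G x < 1})"

definition ivl0 :: "ereal \<Rightarrow> real set" where
  "ivl0 H = {x. 0 \<le> x \<and> ereal x < H}"

text \<open>Hazard rate h = g / (1 - G) (only its values on [0,H) matter).\<close>
definition hazard :: "(real \<Rightarrow> real) \<Rightarrow> (real \<Rightarrow> real) \<Rightarrow> real \<Rightarrow> real" where
  "hazard G g x = g x / (1 - G x)"

definition lsc_on :: "real set \<Rightarrow> (real \<Rightarrow> real) \<Rightarrow> bool" where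
  "lsc_on U f \<longleftrightarrow> (\<forall>x\<in>U. \<forall>c. c < f x \<longrightarrow> (\<forall>\<^sub>F y in at x within U. c < f y))"

definition abs_cont_cdf :: "(real \<Rightarrow> real) \<Rightarrow> (real \<Rightarrow> real) \<Rightarrow> bool" where
  "abs_cont_cdf G g \<longleftrightarrow>
     g \<in> borel_measurable borel \<and> (\<forall>x. 0 \<le> g x) \<and>
     (\<forall>x<0. G x = 0) \<and>
     (\<forall>x\<ge>0. set_integrable lborel {0..x} g \<and> G x = (LINT y:{0..x}|lborel. g y)) \<and>
     (G \<longlongrightarrow> 1) at_top"

definition hazard_regular :: "(real \<Rightarrow> real) \<Rightarrow> (real \<Rightarrow> real) \<Rightarrow> bool" where
  "hazard_regular G g \<longleftrightarrow>
     (\<exists>Hb. ereal Hb < supp_end G \<and>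
       (\<exists>f. (AE x in lborel. Hb < x \<and> ereal x < supp_end G \<longrightarrow> hazard G g x = f x) \<and>
            ((\<exists>B. \<forall>x. Hb < x \<and> ereal x < supp_end G \<longrightarrow> \<bar>f x\<bar> \<le> B) \<or>
             lsc_on {x. Hb < x \<and> ereal x < supp_end G} f)))"

definition assumption_A1 ::
  "(real \<Rightarrow> real) \<Rightarrow> (real \<Rightarrow> real) \<Rightarrow> (real \<Rightarrow> real) \<Rightarrow> (real \<Rightarrow> real) \<Rightarrow> bool" where
  "assumption_A1 Gs gs Gr gr \<longleftrightarrow>
     abs_cont_cdf Gs gs \<and> abs_cont_cdf Gr gr \<and>
     set_integrable lborel {0..} (\<lambda>x. 1 - Gr x) \<and>
     set_integrable lborel {0..} (\<lambda>x. 1 - Gs x) \<and>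
     (LINT x:{0..}|lborel. 1 - Gs x) = 1 \<and>
     set_integrable lborel {0..} (\<lambda>x. x * gs x) \<and>
     (LINT x:{0..}|lborel. x * gs x) = 1 \<and>
     hazard_regular Gs gs \<and> hazard_regular Gr gr"

text \<open>M_F[0,H): finite Borel measures on the reals carried by [0,H).\<close>
definition MF :: "ereal \<Rightarrow> real measure set" where
  "MF H = {\<mu>. sets \<mu> = sets borel \<and> finite_measure \<mu> \<and> emeasure \<mu> (UNIV - ivl0 H) = 0}"

definition mass :: "real measure \<Rightarrow> real" where
  "mass \<mu> = measure \<mu> UNIV"

definition Fmeas :: "real measure \<Rightarrow> real \<Rightarrow> real" where
  "Fmeas \<mu> x = measure \<mu> {0..x}"

definition Finv :: "real measure \<Rightarrow> real \<Rightarrow> real" where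
  "Finv \<mu> y = Inf {x. 0 < x \<and> Fmeas \<mu> x \<ge> y}"

definition weak_tendsto ::
  "ereal \<Rightarrow> (real \<Rightarrow> real measure) \<Rightarrow> real measure \<Rightarrow> real filter \<Rightarrow> bool" where
  "weak_tendsto H \<mu> \<mu>0 F \<longleftrightarrow>
     (\<forall>f::real \<Rightarrow> real. continuous_on (ivl0 H) f \<and> (\<exists>B. \<forall>x\<in>ivl0 H. \<bar>f x\<bar> \<le> B) \<longrightarrow>
        ((\<lambda>s. integral\<^sup>L (\<mu> s) (\<lambda>x. indicator (ivl0 H) x * f x)) \<longlongrightarrow> integral\<^sup>L \<mu>0 (\<lambda>x. indicator (ivl0 H) x * f x)) F)"

definition cadlag :: "(real \<Rightarrow> real) \<Rightarrow> bool" where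
  "cadlag f \<longleftrightarrow> (\<forall>t\<ge>0. (f \<longlongrightarrow> f t) (at_right t)) \<and>
                 (\<forall>t>0. \<exists>l. (f \<longlongrightarrow> l) (at_left t))"

definition cadlag_meas :: "ereal \<Rightarrow> (real \<Rightarrow> real measure) \<Rightarrow> bool" where
  "cadlag_meas H \<mu> \<longleftrightarrow> (\<forall>t\<ge>0. weak_tendsto H \<mu> (\<mu> t) (at_right t)) \<and>
                 (\<forall>t>0. \<exists>l\<in>MF H. weak_tendsto H \<mu> l (at_left t))"

text \<open>phi in C^1_c([0,H) x R_+), given with its partial derivatives phix, phis
  (in the first = space variable and second = time variable). phi is taken to be
  C^1 on R^2 (every C^1 function on the closed quadrant extends so), and its
  support within [0,infinity)^2 is contained in a compact subset of [0,H) x R_+.\<close>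
definition C1c ::
  "ereal \<Rightarrow> (real \<Rightarrow> real \<Rightarrow> real) \<Rightarrow> (real \<Rightarrow> real \<Rightarrow> real) \<Rightarrow> (real \<Rightarrow> real \<Rightarrow> real) \<Rightarrow> bool" where
  "C1c H phi phix phis \<longleftrightarrow>
     (\<forall>x s. ((\<lambda>(a,b). phi a b) has_derivative (\<lambda>(u,v). phix x s * u + phis x s * v)) (at (x,s))) \<and>
     continuous_on UNIV (\<lambda>(a,b). phix a b) \<and> continuous_on UNIV (\<lambda>(a,b). phis a b) \<and>
     (\<exists>C. compact C \<and> C \<subseteq> ivl0 H \<times> {0..} \<and>
          {(x,s). 0 \<le> x \<and> 0 \<le> s \<and> phi x s \<noteq> 0} \<subseteq> C)"

text \<open>Riemann-Stieltjes integral int_0^t f(s) dK(s) for f continuously differentiable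
  (derivative f') and K cadlag with K(0)=0, given by its integration-by-parts value.\<close>
definition stieltjes_C1 ::
  "(real \<Rightarrow> real) \<Rightarrow> (real \<Rightarrow> real) \<Rightarrow> (real \<Rightarrow> real) \<Rightarrow> real \<Rightarrow> real" where
  "stieltjes_C1 f f' K t = f t * K t - f 0 * K 0 - (LINT s:{0..t}|lborel. K s * f' s)"

definition fluid_solution ::
  "(real \<Rightarrow> real) \<Rightarrow> (real \<Rightarrow> real) \<Rightarrow> (real \<Rightarrow> real) \<Rightarrow> (real \<Rightarrow> real) \<Rightarrow> real \<Rightarrow>
   (real \<Rightarrow> real) \<Rightarrow> (real \<Rightarrow> real measure) \<Rightarrow> (real \<Rightarrow> real measure) \<Rightarrow> bool" where
  "fluid_solution Gs gs Gr gr lam X \<nu> \<eta> \<longleftrightarrow>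
   (let Hs = supp_end Gs; Hr = supp_end Gr; hs = hazard Gs gs; hr = hazard Gr gr;
        D = (\<lambda>t. enn2real (set_nn_integral lborel {0..t}
                   (\<lambda>s. \<integral>\<^sup>+ x. ennreal (hs x) \<partial>(\<nu> s))));
        K = (\<lambda>t. mass (\<nu> t) - mass (\<nu> 0) + D t);
        Q = (\<lambda>t. X t - mass (\<nu> t));
        Rn = (\<lambda>t. set_nn_integral lborel {0..t}
                   (\<lambda>s. set_nn_integral lborel {0..Q s} (\<lambda>y. ennreal (hr (Finv (\<eta> s) y)))))
    in
   \<comment> \<open>initial condition in the state space S_0, and the path lives in the state space\<close>
   0 \<le> X 0 \<and>
   (\<forall>t\<ge>0. \<nu> t \<in> MF Hs \<and> \<eta> t \<in> MF Hr) \<and>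
   \<comment> \<open>cadlag\<close>
   cadlag X \<and> cadlag_meas Hs \<nu> \<and> cadlag_meas Hr \<eta> \<and>
   (\<forall>t\<ge>0.
      \<comment> \<open>S(t) < infinity and D(t) < infinity\<close>
      set_nn_integral lborel {0..t} (\<lambda>s. \<integral>\<^sup>+ x. ennreal (hr x) \<partial>(\<eta> s)) < \<infinity> \<and>
      set_nn_integral lborel {0..t} (\<lambda>s. \<integral>\<^sup>+ x. ennreal (hs x) \<partial>(\<nu> s)) < \<infinity> \<and>
      \<comment> \<open>equation for nu\<close>
      (\<forall>phi phix phis. C1c Hs phi phix phis \<longrightarrow>
         set_integrable lborel {0..t} (\<lambda>s. integral\<^sup>L (\<nu> s) (\<lambda>x. phis x s + phix x s)) \<and>
         set_integrable lborel {0..t} (\<lambda>s. integral\<^sup>L (\<nu> s) (\<lambda>x. hs x * phi x s)) \<and>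
         integral\<^sup>L (\<nu> t) (\<lambda>x. phi x t) =
           integral\<^sup>L (\<nu> 0) (\<lambda>x. phi x 0)
           + (LINT s:{0..t}|lborel. integral\<^sup>L (\<nu> s) (\<lambda>x. phis x s + phix x s))
           - (LINT s:{0..t}|lborel. integral\<^sup>L (\<nu> s) (\<lambda>x. hs x * phi x s))
           + stieltjes_C1 (\<lambda>s. phi 0 s) (\<lambda>s. phis 0 s) K t) \<and>
      \<comment> \<open>equation for eta\<close>
      (\<forall>phi phix phis. C1c Hr phi phix phis \<longrightarrow>
         set_integrable lborel {0..t} (\<lambda>s. integral\<^sup>L (\<eta> s) (\<lambda>x. phis x s + phix x s)) \<and>
         set_integrable lborel {0..t} (\<lambda>s. integral\<^sup>L (\<eta> s) (\<lambda>x. hr x * phi x s)) \<and>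
         integral\<^sup>L (\<eta> t) (\<lambda>x. phi x t) =
           integral\<^sup>L (\<eta> 0) (\<lambda>x. phi x 0)
           + (LINT s:{0..t}|lborel. integral\<^sup>L (\<eta> s) (\<lambda>x. phis x s + phix x s))
           - (LINT s:{0..t}|lborel. integral\<^sup>L (\<eta> s) (\<lambda>x. hr x * phi x s))
           + lam * (LINT s:{0..t}|lborel. phi 0 s)) \<and>
      \<comment> \<open>constraints\<close>
      1 - mass (\<nu> t) = max (1 - X t) 0 \<and>
      Rn t < \<infinity> \<and>
      X t = X 0 + lam * t - D t - enn2real (Rn t) \<and>
      Q t \<le> mass (\<eta> t)))"

definition queue :: "(real \<Rightarrow> real) \<Rightarrow> (real \<Rightarrow> real measure) \<Rightarrow> real \<Rightarrow> real" where
  "queue X \<nu> t = X t - mass (\<nu> t)"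

end

theory Submission
  imports Defs
begin

text \<open>Choose c above the limit superior of Q and T such that Q < c after time T.
  On [0,T) the queue is bounded by X(0) + \<lambda>T, since X(t) \<le> X(0) + \<lambda>t and Q \<le> X.
  Splitting the convolution at T bounds it by (X(0) + \<lambda>T)(G(t) - G(t - T)) + c G(t),
  which tends to c because G(t) \<rightarrow> 1.\<close>

lemma fluid_solution_queue_bounds:
  assumes "fluid_solution Gs gs Gr gr lam X \<nu> \<eta>" and "0 \<le> t"
  shows "0 \<le> queue X \<nu> t" and "queue X \<nu> t \<le> X 0 + lam * t"
proof -
  let ?D = "set_nn_integral lborel {0..t} (\<lambda>s. \<integral>\<^sup>+ x. ennreal (hazard Gs gs x) \<partial>(\<nu> s))"
  let ?R = "set_nn_integral lborel {0..t} (\<lambda>s. set_nn_integral lborel {0..X s - mass (\<nu> s)}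
              (\<lambda>y. ennreal (hazard Gr gr (Finv (\<eta> s) y))))"
  have "1 - mass (\<nu> t) = max (1 - X t) 0 \<and> X t = X 0 + lam * t - enn2real ?D - enn2real ?R"
    using assms(1) unfolding fluid_solution_def Let_def
    apply (elim conjE)
    apply (drule spec[where x=t])+
    apply (drule mp, rule assms(2))+
    apply (elim conjE)
    apply (intro conjI; assumption)
    done
  then have mass: "1 - mass (\<nu> t) = max (1 - X t) 0"
    and X: "X t = X 0 + lam * t - enn2real ?D - enn2real ?R"
    by simp_all
  have "X t \<le> X 0 + lam * t"
    using X enn2real_nonneg[of ?D] enn2real_nonneg[of ?R] by linarith
  moreover have "0 \<le> mass (\<nu> t)"
    unfolding mass_def by simp
  ultimately show "0 \<le> queue X \<nu> t" and "queue X \<nu> t \<le> X 0 + lam * t"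
    using mass unfolding queue_def by (cases "X t \<le> 1"; simp)+
qed

lemma set_integral_Ioc_eq_diff:
  fixes G g :: "real \<Rightarrow> real"
  assumes G: "\<forall>x\<ge>0. set_integrable lborel {0..x} g \<and> G x = (LINT y:{0..x}|lborel. g y)"
    and "0 \<le> a" "a \<le> b"
  shows "(LINT u:{a<..b}|lborel. g u) = G b - G a"
proof -
  have int_0a: "set_integrable lborel {0..a} g"
    and int_ab: "set_integrable lborel {a<..b} g"
    using G assms by (auto intro: set_integrable_subset[of _ "{0..b}"])
  have "(LINT u:{0..a} \<union> {a<..b}|lborel. g u) = (LINT u:{0..a}|lborel. g u) + (LINT u:{a<..b}|lborel. g u)"
    by (rule set_integral_Un[OF _ int_0a int_ab]) auto
  moreover have "{0..a} \<union> {a<..b} = {0..b}"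
    using assms by auto
  ultimately show ?thesis
    using G assms by auto
qed

lemma lborel_integral_reflect:
  fixes f :: "real \<Rightarrow> real"
  shows "(LINT s|lborel. indicator A (t - s) * f (t - s)) = (LINT u:A|lborel. f u)"
  using lborel_integral_real_affine[of "-1" "\<lambda>u. indicator A u * f u" t]
  by (simp add: set_lebesgue_integral_def)

lemma lborel_integrable_reflect:
  fixes f :: "real \<Rightarrow> real"
  assumes "set_integrable lborel A f"
  shows "integrable lborel (\<lambda>s. indicator A (t - s) * f (t - s))"
  using lborel_integrable_real_affine[of "\<lambda>u. indicator A u * f u" "-1" t] assms
  by (simp add: set_integrable_def)

lemma convolution_le_split:
  fixes g Q :: "real \<Rightarrow> real" and M c T t :: real
  assumes g_nonneg: "\<And>x. 0 \<le> g x"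
    and g_int: "set_integrable lborel {0..t} g"
    and "0 \<le> M" "0 \<le> c" "0 \<le> T" "T \<le> t"
    and Q_early: "\<And>s. 0 \<le> s \<Longrightarrow> s < T \<Longrightarrow> Q s \<le> M"
    and Q_late: "\<And>s. T \<le> s \<Longrightarrow> Q s \<le> c"
  shows "(LINT s:{0..t}|lborel. Q s * g (t - s))
     \<le> M * (LINT u:{t-T<..t}|lborel. g u) + c * (LINT u:{0..t}|lborel. g u)"
proof -
  define h where "h s = M * (indicator {t-T<..t} (t - s) * g (t - s))
                        + c * (indicator {0..t} (t - s) * g (t - s))" for s
  have "set_integrable lborel {t-T<..t} g"
    by (rule set_integrable_subset[OF g_int]) (use assms in auto)
  then have "integrable lborel (\<lambda>s. indicator {t-T<..t} (t - s) * g (t - s))"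
    by (rule lborel_integrable_reflect)
  moreover have "integrable lborel (\<lambda>s. indicator {0..t} (t - s) * g (t - s))"
    using g_int by (rule lborel_integrable_reflect)
  ultimately have h_int: "integrable lborel h"
    and h_integral: "(LINT s|lborel. h s) = M * (LINT u:{t-T<..t}|lborel. g u) + c * (LINT u:{0..t}|lborel. g u)"
    by (simp_all add: h_def[abs_def] lborel_integral_reflect)
  have h_nonneg: "0 \<le> h s" for s
    using g_nonneg[of "t - s"] assms by (simp add: h_def indicator_def)
  have h_bound: "indicator {0..t} s * (Q s * g (t - s)) \<le> h s" for s
  proof (cases "s \<in> {0..t}")
    case True
    have "Q s \<le> (if s < T then M + c else c)"
    proof (cases "s < T")
      case True
      then show ?thesis
        using Q_early[of s] \<open>s \<in> {0..t}\<close> \<open>0 \<le> c\<close> by simp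
    qed (simp add: Q_late)
    then have "Q s * g (t - s) \<le> (if s < T then M + c else c) * g (t - s)"
      using g_nonneg by (rule mult_right_mono)
    moreover have "h s = (if s < T then M + c else c) * g (t - s)"
      using True by (simp add: h_def algebra_simps)
    ultimately show ?thesis
      using True by simp
  qed (simp add: h_nonneg)
  show ?thesis
  proof (cases "set_integrable lborel {0..t} (\<lambda>s. Q s * g (t - s))")
    case True
    then have "(LINT s:{0..t}|lborel. Q s * g (t - s)) \<le> (LINT s|lborel. h s)"
      unfolding set_lebesgue_integral_def set_integrable_def
      using h_int h_bound by (auto intro: integral_mono)
    then show ?thesis
      using h_integral by simp
  next
    case False
    text \<open>A non-integrable integrand has the junk integral 0.\<close>
    then have "(LINT s:{0..t}|lborel. Q s * g (t - s)) = 0"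
      by (simp add: set_lebesgue_integral_def set_integrable_def not_integrable_integral_eq)
    moreover have "0 \<le> (LINT s|lborel. h s)"
      using h_nonneg by (simp add: integral_nonneg_AE)
    ultimately show ?thesis
      using h_integral by simp
  qed
qed

lemma Limsup_convolution_le:
  fixes G g Q :: "real \<Rightarrow> real"
  assumes g_nonneg: "\<And>x. 0 \<le> g x"
    and G: "\<forall>x\<ge>0. set_integrable lborel {0..x} g \<and> G x = (LINT y:{0..x}|lborel. g y)"
    and G_lim: "(G \<longlongrightarrow> 1) at_top"
    and Q_nonneg: "\<And>s. 0 \<le> s \<Longrightarrow> 0 \<le> Q s"
    and Q_bdd: "\<And>T. \<exists>M. \<forall>s\<in>{0..T}. Q s \<le> M"
  shows "Limsup at_top (\<lambda>t. ereal (LINT s:{0..t}|lborel. Q s * g (t - s)))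
           \<le> Limsup at_top (\<lambda>t. ereal (Q t))"
proof (rule dense_ge)
  fix y :: ereal
  assume y: "Limsup at_top (\<lambda>t. ereal (Q t)) < y"
  show "Limsup at_top (\<lambda>t. ereal (LINT s:{0..t}|lborel. Q s * g (t - s))) \<le> y"
  proof (cases y)
    case (real c)
    have "\<forall>\<^sub>F t in at_top. ereal (Q t) < y"
      using y by (rule Limsup_lessD)
    then obtain T0 where T0: "\<And>t. T0 \<le> t \<Longrightarrow> Q t < c"
      unfolding eventually_at_top_linorder real by auto
    define T where "T = max T0 0"
    have "0 \<le> T" and Q_late: "\<And>t. T \<le> t \<Longrightarrow> Q t < c"
      using T0 by (auto simp: T_def)
    have "0 \<le> c"
      using Q_nonneg[of T] Q_late[of T] \<open>0 \<le> T\<close> by simp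
    obtain M0 where M0: "\<forall>s\<in>{0..T}. Q s \<le> M0"
      using Q_bdd by blast
    define M where "M = max M0 0"
    have Q_early: "\<And>s. s \<in> {0..T} \<Longrightarrow> Q s \<le> M" and "0 \<le> M"
      using M0 by (auto simp: M_def intro: max.coboundedI1)
    define B where "B t = M * (G t - G (t - T)) + c * G t" for t
    have "\<forall>\<^sub>F t in at_top. ereal (LINT s:{0..t}|lborel. Q s * g (t - s)) \<le> ereal (B t)"
    proof (rule eventually_at_top_linorderI)
      fix t
      assume "T \<le> t"
      have "(LINT s:{0..t}|lborel. Q s * g (t - s))
          \<le> M * (LINT u:{t-T<..t}|lborel. g u) + c * (LINT u:{0..t}|lborel. g u)"
      proof (rule convolution_le_split[OF g_nonneg _ \<open>0 \<le> M\<close> \<open>0 \<le> c\<close> \<open>0 \<le> T\<close> \<open>T \<le> t\<close>])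
        show "set_integrable lborel {0..t} g"
          using G \<open>0 \<le> T\<close> \<open>T \<le> t\<close> by simp
        show "Q s \<le> M" if "0 \<le> s" "s < T" for s
          using Q_early that by simp
        show "Q s \<le> c" if "T \<le> s" for s
          using Q_late[OF that] by simp
      qed
      also have "\<dots> = B t"
        using set_integral_Ioc_eq_diff[OF G, of "t - T" t] G \<open>0 \<le> T\<close> \<open>T \<le> t\<close>
        by (simp add: B_def)
      finally show "ereal (LINT s:{0..t}|lborel. Q s * g (t - s)) \<le> ereal (B t)"
        by simp
    qed
    then have "Limsup at_top (\<lambda>t. ereal (LINT s:{0..t}|lborel. Q s * g (t - s)))
        \<le> Limsup at_top (\<lambda>t. ereal (B t))"
      by (rule Limsup_mono)
    also have "\<dots> = ereal c"
    proof (rule lim_imp_Limsup[OF trivial_limit_at_top_linorder])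
      have "filterlim (\<lambda>t. t - T) at_top at_top"
        using filterlim_tendsto_add_at_top[OF tendsto_const[of "- T"] filterlim_ident] by simp
      then have "((\<lambda>t. G (t - T)) \<longlongrightarrow> 1) at_top"
        by (rule filterlim_compose[OF G_lim])
      then have "(B \<longlongrightarrow> M * (1 - 1) + c * 1) at_top"
        unfolding B_def[abs_def] by (intro tendsto_intros G_lim)
      then have "(B \<longlongrightarrow> c) at_top"
        by simp
      then show "((\<lambda>t. ereal (B t)) \<longlongrightarrow> ereal c) at_top"
        by (rule tendsto_ereal)
    qed
    finally show ?thesis
      using real by simp
  qed (use y in auto)
qed

theorem mainTheorem3:
  fixes Gs gs Gr gr :: "real \<Rightarrow> real" and lam :: real
    and X :: "real \<Rightarrow> real" and \<nu> \<eta> :: "real \<Rightarrow> real measure"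
  assumes "assumption_A1 Gs gs Gr gr"
    and "0 \<le> lam"
    and "fluid_solution Gs gs Gr gr lam X \<nu> \<eta>"
  shows "Limsup at_top (\<lambda>t. ereal (LINT s:{0..t}|lborel. queue X \<nu> s * gs (t - s)))
           \<le> Limsup at_top (\<lambda>t. ereal (queue X \<nu> t))"
proof (rule Limsup_convolution_le)
  have "abs_cont_cdf Gs gs"
    using assms(1) unfolding assumption_A1_def by simp
  then show "\<And>x. 0 \<le> gs x" and "(Gs \<longlongrightarrow> 1) at_top"
    and "\<forall>x\<ge>0. set_integrable lborel {0..x} gs \<and> Gs x = (LINT y:{0..x}|lborel. gs y)"
    unfolding abs_cont_cdf_def by simp_all
  show "\<And>s. 0 \<le> s \<Longrightarrow> 0 \<le> queue X \<nu> s"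
    using assms(3) by (rule fluid_solution_queue_bounds)
  show "\<exists>M. \<forall>s\<in>{0..T}. queue X \<nu> s \<le> M" for T
  proof (intro exI ballI)
    fix s
    assume "s \<in> {0..T}"
    then show "queue X \<nu> s \<le> X 0 + lam * T"
      using fluid_solution_queue_bounds(2)[OF assms(3), of s] mult_left_mono[OF _ assms(2), of s T]
      by simp
  qed
qed

end
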